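(* Let $\alpha,\beta>-1$ and let $m,n$ be non-negative integers. For $y\in\mathbb{R}$ define \[ R_{m,n}(y)=\int_{-1}^1(1-x)^\alpha (1+x)^\beta P_n^{(\alpha,\beta)}(x)P_{n+m}^{(\alpha,\beta)}(x+y)\,dx . \] Then \begin{multline*} R_{m,n}(y)= 2^{\alpha+\beta+1}\dfrac{\Gamma(\alpha+n+1)\Gamma(\beta+n+1)}{\Gamma(\alpha+\beta+2n+2)} \dfrac{\Gamma(\alpha+\beta+2m+2n+1)}{\Gamma(\alpha+\beta+m+n+1)}\dfrac{1}{n!\,m!}\left(\dfrac{y}{2}\right)^m \\ \cdot F_2\left(-m;\ \beta+n+1,\ -\beta-m-n;\ \alpha+\beta+2n+2,\ -\alpha-\beta-2m-2n;\ -\dfrac{2}{y},\dfrac{2}{y}\right). \end{multline*}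
   Context: $P_n^{(\alpha,\beta)}$ is the Jacobi polynomial, $P_n^{(\alpha,\beta)}(x)=\frac{(\alpha+1)_n}{n!}\sum_{k=0}^n\frac{(-n)_k(\alpha+\beta+n+1)_k}{(\alpha+1)_k\,k!}\left(\frac{1-x}{2}\right)^k$, where $(a)_k=a(a+1)\cdots(a+k-1)$ is the Pochhammer symbol. $F_2$ is the Appell function $F_2(a;b,b';c,c';u,v)=\sum_{k,l\ge 0}\frac{(a)_{k+l}(b)_k(b')_l}{(c)_k(c')_l\,k!\,l!}u^kv^l$; for $a=-m$ the sum terminates ($k+l\le m$), so $y^mF_2(-m;\dots;-2/y,2/y)$ is a polynomial in $y$, and the right-hand side is understood as this polynomial (in particular at $y=0$). *)

theory Defs
  imports "HOL-Analysis.Analysis"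
begin

definition jacobiP :: "nat \<Rightarrow> real \<Rightarrow> real \<Rightarrow> real \<Rightarrow> real" where
  "jacobiP n a b x = pochhammer (a + 1) n / fact n *
     (\<Sum>k\<le>n. pochhammer (- real n) k * pochhammer (a + b + real n + 1) k
              / (pochhammer (a + 1) k * fact k) * ((1 - x) / 2) ^ k)"

text \<open>Appell F2 with first parameter a = -m (terminating: terms with k + l > m vanish
  since pochhammer (-m) (k+l) = 0).\<close>
definition appellF2_neg :: "nat \<Rightarrow> real \<Rightarrow> real \<Rightarrow> real \<Rightarrow> real \<Rightarrow> real \<Rightarrow> real \<Rightarrow> real" where
  "appellF2_neg m b b' c c' u v =
     (\<Sum>k\<le>m. \<Sum>l\<le>m - k. pochhammer (- real m) (k + l) * pochhammer b k * pochhammer b' l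
        / (pochhammer c k * pochhammer c' l * fact k * fact l) * u ^ k * v ^ l)"

text \<open>The polynomial (y/2)^m * F2(-m; b, b'; c, c'; -2/y, 2/y), valid for all real y
  (including y = 0), obtained by multiplying out the terminating sum.\<close>
definition appellF2_poly :: "nat \<Rightarrow> real \<Rightarrow> real \<Rightarrow> real \<Rightarrow> real \<Rightarrow> real \<Rightarrow> real" where
  "appellF2_poly m b b' c c' y =
     (\<Sum>k\<le>m. \<Sum>l\<le>m - k. pochhammer (- real m) (k + l) * pochhammer b k * pochhammer b' l
        / (pochhammer c k * pochhammer c' l * fact k * fact l) * (-1) ^ k * (y / 2) ^ (m - k - l))"

lemma appellF2_poly_eq:
  assumes "y \<noteq> 0"
  shows "appellF2_poly m b b' c c' y = (y / 2) ^ m * appellF2_neg m b b' c c' (- 2 / y) (2 / y)"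
proof -
  have key: "(y / 2) ^ m * ((- 2 / y) ^ k * (2 / y) ^ l) = (-1) ^ k * (y / 2) ^ (m - k - l)"
    if "l \<le> m - k" "k \<le> m" for k l
  proof -
    have m: "m = (m - k - l) + k + l" using that by simp
    have "(y / 2) ^ m = (y / 2) ^ (m - k - l) * (y / 2) ^ k * (y / 2) ^ l"
      by (subst m) (simp add: power_add)
    moreover have "(y / 2) ^ k * (- 2 / y) ^ k = (-1) ^ k"
      using assms by (simp add: power_mult_distrib[symmetric])
    moreover have "(y / 2) ^ l * (2 / y) ^ l = 1"
      using assms by (simp add: power_mult_distrib[symmetric])
    ultimately show ?thesis
    proof -
      assume h: "(y / 2) ^ m = (y / 2) ^ (m - k - l) * (y / 2) ^ k * (y / 2) ^ l"
        "(y / 2) ^ k * (- 2 / y) ^ k = (-1) ^ k" "(y / 2) ^ l * (2 / y) ^ l = 1"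
      have "(y / 2) ^ m * ((- 2 / y) ^ k * (2 / y) ^ l)
          = (y / 2) ^ (m - k - l) * ((y / 2) ^ k * (- 2 / y) ^ k) * ((y / 2) ^ l * (2 / y) ^ l)"
        unfolding h(1) by (simp only: mult_ac)
      then show ?thesis unfolding h(2,3) by simp
    qed
  qed
  show ?thesis
    unfolding appellF2_poly_def appellF2_neg_def sum_distrib_left
    apply (intro sum.cong refl)
    using key by (simp add: algebra_simps)
qed

definition jacobi_R :: "real \<Rightarrow> real \<Rightarrow> nat \<Rightarrow> nat \<Rightarrow> real \<Rightarrow> real" where
  "jacobi_R a b m n y = integral {-1..1}
     (\<lambda>x. (1 - x) powr a * (1 + x) powr b * jacobiP n a b x * jacobiP (n + m) a b (x + y))"

end

theory Submission
  imports Defs "HOL-Computational_Algebra.Formal_Power_Series"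
begin

text \<open>Expand \<open>P_(n+m)(x + y)\<close> in powers of \<open>(1 + x + y)/2 = (1 + x)/2 + y/2\<close> and then,
  binomially, in powers of \<open>(1 + x)/2\<close>.  Against the weight times \<open>P_n(x)\<close>, the power
  \<open>((1 + x)/2)^i\<close> integrates to a sum of Beta values that Chu-Vandermonde evaluates in closed
  form; by orthogonality it vanishes for \<open>i < n\<close>.  What remains is a double sum over a triangle
  which, reindexed, is the terminating Appell series.\<close>

definition jacobi_weight :: "real \<Rightarrow> real \<Rightarrow> real \<Rightarrow> real" where
  "jacobi_weight a b x = (1 - x) powr a * (1 + x) powr b"

lemma has_integral_jacobi_weight:
  assumes "a > -1" and "b > -1"
  shows "(jacobi_weight a b has_integral 2 powr (a + b + 1) * Beta (a + 1) (b + 1)) {-1..1}"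
proof -
  have "((\<lambda>t. t powr b * (1 - t) powr a) has_integral Beta (b + 1) (a + 1)) (cbox 0 1)"
    using has_integral_Beta_real[of "b + 1" "a + 1"] assms by simp
  from has_integral_affinity'[OF this, of "1/2" "1/2"]
  have "((\<lambda>x. ((1 + x) / 2) powr b * ((1 - x) / 2) powr a) has_integral
      2 * Beta (a + 1) (b + 1)) {-1..1}"
    by (simp add: field_simps Beta_commute)
  from has_integral_mult_right[OF this, of "2 powr (a + b)"]
  show ?thesis
  proof (rule has_integral_eq_rhs[OF has_integral_eq, rotated])
    fix x :: real assume "x \<in> {-1..1}"
    then have "1 - x \<ge> 0" "1 + x \<ge> 0" by auto
    then show "2 powr (a + b) * (((1 + x) / 2) powr b * ((1 - x) / 2) powr a)
        = jacobi_weight a b x"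
      by (simp add: jacobi_weight_def powr_add powr_divide)
  qed (simp add: powr_add)
qed

lemma powr_add_of_nat:
  fixes z :: real
  assumes "z \<ge> 0"
  shows "z powr (a + real k) = z powr a * z ^ k"
  using assms by (cases "z = 0") (simp_all add: powr_add powr_realpow)

lemma has_integral_jacobi_weight_monomial:
  assumes "a > -1" and "b > -1"
  shows "((\<lambda>x. jacobi_weight a b x * ((1 - x) / 2) ^ k * ((1 + x) / 2) ^ i) has_integral
           2 powr (a + b + 1) * Beta (a + real k + 1) (b + real i + 1)) {-1..1}"
proof -
  have two_powr:
    "2 powr (a + real k + (b + real i) + 1) = 2 powr (a + b + 1) * (2::real) ^ (k + i)"
    using powr_add_of_nat[of 2 "a + b + 1" "k + i"] by (simp add: add_ac)
  have "((\<lambda>x. (1/2) ^ (k + i) * jacobi_weight (a + real k) (b + real i) x) has_integral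
      (1/2) ^ (k + i) * (2 powr (a + real k + (b + real i) + 1)
        * Beta (a + real k + 1) (b + real i + 1))) {-1..1}"
    using assms by (intro has_integral_mult_right has_integral_jacobi_weight) auto
  then show ?thesis
  proof (rule has_integral_eq_rhs[OF has_integral_eq, rotated])
    fix x :: real assume "x \<in> {-1..1}"
    then have "1 - x \<ge> 0" "1 + x \<ge> 0" by auto
    then show "(1/2) ^ (k + i) * jacobi_weight (a + real k) (b + real i) x
        = jacobi_weight a b x * ((1 - x) / 2) ^ k * ((1 + x) / 2) ^ i"
      by (simp add: jacobi_weight_def powr_add_of_nat power_add power_divide field_simps)
  qed (simp add: two_powr power_one_over)
qed

lemma Gamma_add_of_nat:
  fixes z :: real
  assumes "z > 0"
  shows "Gamma (z + real k) = Gamma z * pochhammer z k"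
proof -
  have "z \<notin> \<int>\<^sub>\<le>\<^sub>0" using assms nonpos_Ints_nonpos by force
  then show ?thesis using pochhammer_Gamma[of z k] Gamma_real_pos[OF assms] by simp
qed

lemma pochhammer_minus_of_nat:
  assumes "j \<le> N"
  shows "pochhammer (- of_nat N :: 'a::field_char_0) j = (-1) ^ j * fact N / fact (N - j)"
proof -
  have "(of_nat (N choose j) :: 'a) = (-1) ^ j * pochhammer (- of_nat N) j / fact j"
    by (simp add: binomial_gbinomial gbinomial_pochhammer)
  then show ?thesis
    using assms by (simp add: binomial_fact field_simps)
qed

lemma pochhammer_of_nat_plus_one:
  "pochhammer (of_nat p + 1 :: 'a::field_char_0) n = fact (p + n) / fact p"
proof -
  have "fact (p + n) = (fact p :: 'a) * pochhammer (of_nat p + 1) n"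
    unfolding pochhammer_fact pochhammer_product' by (simp add: add.commute)
  then show ?thesis by simp
qed

lemma sum_triangle_eq_nested:
  fixes n :: nat
  shows "(\<Sum>(i, j)\<in>{(i, j). i + j \<le> n}. f i j) = (\<Sum>i\<le>n. \<Sum>j\<le>n - i. f i j)"
proof -
  have "{(i, j). i + j \<le> n} = Sigma {..n} (\<lambda>i. {..n - i})" by (auto simp: le_diff_conv2)
  then show ?thesis by (simp add: sum.Sigma)
qed

lemma sum_atMost_rev:
  fixes n :: nat
  shows "(\<Sum>i\<le>n. f i) = (\<Sum>i\<le>n. f (n - i))"
  using sum.atLeastAtMost_rev[of f 0 n] by (simp add: atLeast0AtMost)

lemma sum_atMost_add_vanishing_below:
  fixes n m :: nat
  assumes "\<And>i. i < n \<Longrightarrow> f i = 0"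
  shows "(\<Sum>i\<le>n + m. f i) = (\<Sum>p\<le>m. f (n + p))"
proof -
  have "(\<Sum>i\<le>n + m. f i) = (\<Sum>i\<in>{n..n + m}. f i)"
    by (rule sum.mono_neutral_right) (auto simp: assms not_le)
  also have "\<dots> = (\<Sum>p\<le>m. f (n + p))"
    using sum.shift_bounds_cl_nat_ivl[of f 0 n m] by (simp add: atLeast0AtMost add.commute)
  finally show ?thesis .
qed

lemma sum_mult_one_minus_power:
  fixes c :: "nat \<Rightarrow> 'a::comm_ring_1"
  shows "(\<Sum>k\<le>N. c k * (1 - w) ^ k)
       = (\<Sum>j\<le>N. ((-1) ^ j * (\<Sum>i\<le>N - j. of_nat ((j + i) choose j) * c (j + i))) * w ^ j)"
proof -
  have "(\<Sum>k\<le>N. c k * (1 - w) ^ k)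
      = (\<Sum>k\<le>N. \<Sum>j\<le>k. of_nat (k choose j) * c k * (- w) ^ j)"
    using binomial_ring[of "- w" 1] by (simp add: sum_distrib_left mult_ac)
  also have "\<dots>
      = (\<Sum>(j, i)\<in>{(j, i). j + i \<le> N}. of_nat ((j + i) choose j) * c (j + i) * (- w) ^ j)"
    by (subst sum.triangle_reindex_eq) simp
  also have "\<dots>
      = (\<Sum>j\<le>N. ((-1) ^ j * (\<Sum>i\<le>N - j. of_nat ((j + i) choose j) * c (j + i))) * w ^ j)"
    by (simp add: sum_triangle_eq_nested sum_distrib_left sum_distrib_right power_minus[of w]
        mult_ac)
  finally show ?thesis .
qed

definition jacobiP_coeff :: "nat \<Rightarrow> real \<Rightarrow> real \<Rightarrow> nat \<Rightarrow> real" where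
  "jacobiP_coeff N a b j =
     pochhammer (real N + a + b + 1) j * pochhammer (- real N - b) (N - j) / (fact (N - j) * fact j)"

lemma jacobiP_coeff_eq_sum:
  assumes a: "a > -1" and j: "j \<le> N"
  shows "pochhammer (a + 1) N / fact N * ((-1) ^ j *
     (\<Sum>i\<le>N - j. of_nat ((j + i) choose j) * (pochhammer (- real N) (j + i)
        * pochhammer (a + b + real N + 1) (j + i) / (pochhammer (a + 1) (j + i) * fact (j + i)))))
   = jacobiP_coeff N a b j"
proof -
  define M where "M = N - j"
  define B where "B = a + b + real N + 1"
  have N: "N = j + M" using j by (simp add: M_def)
  have pos: "pochhammer (a + 1) k > 0" "pochhammer (a + 1 + real j) k > 0" for k
    using a by (simp_all add: pochhammer_pos)
  have split: "of_nat ((j + i) choose j) * (pochhammer (- real N) (j + i) * pochhammer B (j + i)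
        / (pochhammer (a + 1) (j + i) * fact (j + i)))
      = pochhammer (- real N) j * pochhammer B j / (pochhammer (a + 1) j * fact j) *
        (pochhammer (B + real j) i * pochhammer (- real M) i / (fact i * pochhammer (a + 1 + real j) i))"
    for i
  proof -
    have "- real N + real j = - real M" by (simp add: N)
    then have "pochhammer (- real N) (j + i) = pochhammer (- real N) j * pochhammer (- real M) i"
      using pochhammer_product'[of "- real N" j i] by simp
    then show ?thesis
      using pochhammer_product'[of B j i]
        pochhammer_product'[of "a + 1" j i] pos[of j] pos(2)[of i]
      by (simp add: binomial_fact field_simps)
  qed
  have vandermonde: "(\<Sum>i\<le>M. pochhammer (B + real j) i * pochhammer (- real M) i
        / (fact i * pochhammer (a + 1 + real j) i))
      = pochhammer (- real N - b) M / pochhammer (a + 1 + real j) M"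
  proof -
    have "a + 1 + real j - (B + real j) = - real N - b" by (simp add: B_def)
    then show ?thesis
      using Vandermonde_pochhammer[of M "a + 1 + real j" "B + real j"] a
      by (simp add: atLeast0AtMost)
  qed
  have "pochhammer (a + 1) N = pochhammer (a + 1) j * pochhammer (a + 1 + real j) M"
    by (simp add: N pochhammer_product')
  moreover have "(-1) ^ j * pochhammer (- real N) j = fact N / fact M"
    by (simp add: pochhammer_minus_of_nat[OF j] M_def mult.assoc[symmetric]
        flip: power_mult_distrib)
  ultimately show ?thesis
    unfolding B_def[symmetric] M_def[symmetric] split sum_distrib_left[symmetric] vandermonde
    using pos[of j] pos(2)[of M]
    by (simp add: jacobiP_coeff_def B_def M_def field_simps add_ac)
qed

lemma jacobiP_eq_sum_coeff:
  assumes "a > -1"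
  shows "jacobiP N a b z = (\<Sum>j\<le>N. jacobiP_coeff N a b j * ((1 + z) / 2) ^ j)"
proof -
  have "(1 - z) / 2 = 1 - (1 + z) / 2" by (simp add: field_simps)
  then have "jacobiP N a b z = pochhammer (a + 1) N / fact N *
      (\<Sum>k\<le>N. pochhammer (- real N) k * pochhammer (a + b + real N + 1) k
         / (pochhammer (a + 1) k * fact k) * (1 - (1 + z) / 2) ^ k)"
    unfolding jacobiP_def by (simp only:)
  also have "\<dots> = (\<Sum>j\<le>N. jacobiP_coeff N a b j * ((1 + z) / 2) ^ j)"
    unfolding sum_mult_one_minus_power sum_distrib_left[of "pochhammer (a + 1) N / fact N"]
    by (intro sum.cong refl, subst mult.assoc[symmetric], subst jacobiP_coeff_eq_sum[OF assms])
      auto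
  finally show ?thesis .
qed

definition jacobiP_moment :: "real \<Rightarrow> real \<Rightarrow> nat \<Rightarrow> nat \<Rightarrow> real" where
  "jacobiP_moment a b n i = 2 powr (a + b + 1) * Gamma (a + real n + 1) * Gamma (b + real i + 1)
     / (fact n * Gamma (a + b + real i + real n + 2)) * pochhammer (real i + 1 - real n) n"

lemma jacobiP_moment_eq_sum_Beta:
  assumes a: "a > -1" and b: "b > -1"
  shows "jacobiP_moment a b n i = 2 powr (a + b + 1) *
    (\<Sum>k\<le>n. pochhammer (a + 1) n / fact n * (pochhammer (- real n) k
       * pochhammer (a + b + real n + 1) k / (pochhammer (a + 1) k * fact k))
       * Beta (a + real k + 1) (b + real i + 1))"
proof -
  define B where "B = a + b + real n + 1"
  define C where "C = a + b + real i + 2"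
  have a1: "a + 1 > 0" and C: "C > 0" using a b by (simp_all add: C_def)
  have Gamma_a: "Gamma (a + real k + 1) = Gamma (a + 1) * pochhammer (a + 1) k" for k
    using Gamma_add_of_nat[OF a1, of k] by (simp add: add_ac)
  have Gamma_C: "Gamma (a + real k + 1 + (b + real i + 1)) = Gamma C * pochhammer C k" for k
    using Gamma_add_of_nat[OF C, of k] by (simp add: C_def add_ac)
  have pos: "pochhammer (a + 1) k > 0" "pochhammer C k > 0" "Gamma (a + 1) > 0" "Gamma C > 0" for k
    using a1 C by (simp_all add: pochhammer_pos)
  have summand: "pochhammer (a + 1) n / fact n * (pochhammer (- real n) k * pochhammer B k
        / (pochhammer (a + 1) k * fact k)) * Beta (a + real k + 1) (b + real i + 1)
      = pochhammer (a + 1) n / fact n * Gamma (a + 1) * Gamma (b + real i + 1) / Gamma C *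
        (pochhammer B k * pochhammer (- real n) k / (fact k * pochhammer C k))" for k
    unfolding Beta_def Gamma_a Gamma_C using pos(1,2)[of k] pos(3,4) by (simp add: field_simps)
  have vandermonde: "(\<Sum>k\<le>n. pochhammer B k * pochhammer (- real n) k / (fact k * pochhammer C k))
      = pochhammer (real i + 1 - real n) n / pochhammer C n"
  proof -
    have "C - B = real i + 1 - real n" by (simp add: B_def C_def)
    then show ?thesis
      using Vandermonde_pochhammer[of n C B] C by (simp add: atLeast0AtMost)
  qed
  have "Gamma (a + real n + 1) = Gamma (a + 1) * pochhammer (a + 1) n"
    by (rule Gamma_a)
  moreover have "Gamma (a + b + real i + real n + 2) = Gamma C * pochhammer C n"
    using Gamma_add_of_nat[OF C, of n] by (simp add: C_def add_ac)
  ultimately show ?thesis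
    unfolding B_def[symmetric] summand sum_distrib_left[symmetric] vandermonde
    using pos(1,2)[of n] pos(3,4) by (simp add: jacobiP_moment_def field_simps)
qed

lemma has_integral_jacobiP_moment:
  assumes "a > -1" and "b > -1"
  shows "((\<lambda>x. jacobi_weight a b x * jacobiP n a b x * ((1 + x) / 2) ^ i) has_integral
           jacobiP_moment a b n i) {-1..1}"
proof -
  define A where "A k = pochhammer (a + 1) n / fact n * (pochhammer (- real n) k
     * pochhammer (a + b + real n + 1) k / (pochhammer (a + 1) k * fact k))" for k
  have "((\<lambda>x. \<Sum>k\<le>n. A k * (jacobi_weight a b x * ((1 - x) / 2) ^ k * ((1 + x) / 2) ^ i))
      has_integral
      (\<Sum>k\<le>n. A k * (2 powr (a + b + 1) * Beta (a + real k + 1) (b + real i + 1)))) {-1..1}"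
    using assms by (intro has_integral_sum finite_atMost has_integral_mult_right
        has_integral_jacobi_weight_monomial)
  moreover have "jacobiP n a b x = (\<Sum>k\<le>n. A k * ((1 - x) / 2) ^ k)" for x
    unfolding jacobiP_def A_def by (simp add: sum_distrib_left mult.assoc)
  ultimately show ?thesis
    using jacobiP_moment_eq_sum_Beta[OF assms, of n i]
    by (simp add: A_def sum_distrib_left sum_distrib_right mult_ac)
qed

lemma jacobiP_moment_eq_0:
  assumes "i < n"
  shows "jacobiP_moment a b n i = 0"
proof -
  have "pochhammer (real i + 1 - real n) n = 0"
    unfolding pochhammer_eq_0_iff using assms
    by (intro exI[of _ "n - 1 - i"]) (auto simp: of_nat_diff)
  then show ?thesis by (simp add: jacobiP_moment_def)
qed

lemma jacobiP_moment_add: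
  assumes a: "a > -1" and b: "b > -1"
  shows "jacobiP_moment a b n (n + k) =
    2 powr (a + b + 1) * Gamma (a + real n + 1) * Gamma (b + real n + 1)
      / (fact n * Gamma (a + b + 2 * real n + 2)) * (fact (n + k) / fact k)
    * (pochhammer (b + real n + 1) k / pochhammer (a + b + 2 * real n + 2) k)"
proof -
  have b1: "b + real n + 1 > 0" and c1: "a + b + 2 * real n + 2 > 0" using a b by simp_all
  have "Gamma (b + real (n + k) + 1) = Gamma (b + real n + 1) * pochhammer (b + real n + 1) k"
    using Gamma_add_of_nat[OF b1, of k] by (simp add: add_ac)
  moreover have "Gamma (a + b + real (n + k) + real n + 2)
      = Gamma (a + b + 2 * real n + 2) * pochhammer (a + b + 2 * real n + 2) k"
    using Gamma_add_of_nat[OF c1, of k] by (simp add: add_ac)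
  moreover have "pochhammer (real (n + k) + 1 - real n) n = fact (n + k) / fact k"
    using pochhammer_of_nat_plus_one[of k n] by (simp add: add.commute)
  moreover have "pochhammer (a + b + 2 * real n + 2) k > 0" "Gamma (a + b + 2 * real n + 2) > 0"
    using c1 by (simp_all add: pochhammer_pos)
  ultimately show ?thesis
    by (simp add: jacobiP_moment_def field_simps)
qed

lemma jacobi_R_eq_sum_moments:
  assumes "a > -1" and "b > -1"
  shows "jacobi_R a b m n y = (\<Sum>j\<le>n + m. jacobiP_coeff (n + m) a b j *
    (\<Sum>i\<le>j. of_nat (j choose i) * (y / 2) ^ (j - i) * jacobiP_moment a b n i))"
proof -
  have "jacobiP (n + m) a b (x + y) = (\<Sum>j\<le>n + m. jacobiP_coeff (n + m) a b j *
      (\<Sum>i\<le>j. of_nat (j choose i) * ((1 + x) / 2) ^ i * (y / 2) ^ (j - i)))" for x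
  proof -
    have shift: "(1 + (x + y)) / 2 = (1 + x) / 2 + y / 2" by (simp add: field_simps)
    show ?thesis
      unfolding jacobiP_eq_sum_coeff[OF assms(1)] shift binomial_ring ..
  qed
  then have integrand: "jacobi_weight a b x * jacobiP n a b x * jacobiP (n + m) a b (x + y)
      = (\<Sum>j\<le>n + m. \<Sum>i\<le>j. jacobiP_coeff (n + m) a b j
          * (of_nat (j choose i) * (y / 2) ^ (j - i))
          * (jacobi_weight a b x * jacobiP n a b x * ((1 + x) / 2) ^ i))" for x
    by (simp add: sum_distrib_left sum_distrib_right mult_ac)
  have "((\<lambda>x. jacobi_weight a b x * jacobiP n a b x * jacobiP (n + m) a b (x + y)) has_integral
      (\<Sum>j\<le>n + m. \<Sum>i\<le>j. jacobiP_coeff (n + m) a b j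
          * (of_nat (j choose i) * (y / 2) ^ (j - i)) * jacobiP_moment a b n i)) {-1..1}"
    unfolding integrand using assms
    by (intro has_integral_sum finite_atMost has_integral_mult_right has_integral_jacobiP_moment)
  then show ?thesis
    unfolding jacobi_R_def jacobi_weight_def[symmetric]
    by (simp add: integral_unique sum_distrib_left mult_ac)
qed

lemma jacobiP_coeff_moment_eq_appellF2_term:
  assumes a: "a > -1" and b: "b > -1" and "k \<le> q" and "q \<le> m"
  shows "jacobiP_coeff (n + m) a b (n + q) * of_nat ((n + q) choose (n + k))
      * jacobiP_moment a b n (n + k)
    = 2 powr (a + b + 1)
      * (Gamma (a + real n + 1) * Gamma (b + real n + 1) / Gamma (a + b + 2 * real n + 2))
      * pochhammer (a + b + real m + real n + 1) (m + n) * (1 / (fact n * fact m))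
      * (pochhammer (- real m) (k + (m - q)) * pochhammer (b + real n + 1) k
          * pochhammer (- b - real m - real n) (m - q)
         / (pochhammer (a + b + 2 * real n + 2) k
            * pochhammer (- a - b - 2 * real m - 2 * real n) (m - q) * fact k * fact (m - q))
         * (-1) ^ k)"
proof -
  define l where "l = m - q"
  define X where "X = a + b + 2 * real m + 2 * real n - real l + 1"
  have X: "pochhammer X l > 0"
  proof (cases "l = 0")
    case False
    then have "X > 0" using a b assms(4) by (simp add: X_def l_def of_nat_diff)
    then show ?thesis by (rule pochhammer_pos)
  qed simp
  have "pochhammer (a + b + 2 * real n + 2) k > 0" "Gamma (a + b + 2 * real n + 2) > 0"
    using a b by (simp_all add: pochhammer_pos)
  moreover have "(-1) ^ k * pochhammer (- real m) (k + l) = (-1) ^ l * fact m / fact (q - k)"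
  proof -
    have "(-1::real) ^ k * (-1) ^ k = 1" by (simp flip: power_mult_distrib)
    moreover have "k + l \<le> m" "m - (k + l) = q - k" using assms(3,4) by (simp_all add: l_def)
    ultimately show ?thesis
      using pochhammer_minus_of_nat[of "k + l" m, where 'a = real]
      by (simp add: power_add mult.assoc[symmetric])
  qed
  moreover have "pochhammer (- a - b - 2 * real m - 2 * real n) l = (-1) ^ l * pochhammer X l"
    using pochhammer_minus[of "a + b + 2 * real m + 2 * real n" l] by (simp add: X_def)
  moreover have "pochhammer (a + b + real m + real n + 1) (m + n)
      = pochhammer (real (n + m) + a + b + 1) (n + q) * pochhammer X l"
  proof -
    have "m + n = (n + q) + l" "real (n + m) + a + b + 1 + real (n + q) = X"
      using assms(4) by (simp_all add: X_def l_def of_nat_diff)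
    then show ?thesis
      using pochhammer_product'[of "real (n + m) + a + b + 1" "n + q" l] by (simp add: add_ac)
  qed
  moreover have "n + m - (n + q) = l" by (simp add: l_def)
  moreover have minus_N_b: "- real (n + m) - b = - b - real m - real n" by simp
  ultimately show ?thesis
    unfolding l_def[symmetric] jacobiP_coeff_def jacobiP_moment_add[OF a b] minus_N_b
    using X assms(3) by (simp add: binomial_fact field_simps power_add)
qed

lemma sum_jacobiP_coeff_moments_eq_appellF2_poly:
  assumes a: "a > -1" and b: "b > -1"
  shows "(\<Sum>j\<le>n + m. jacobiP_coeff (n + m) a b j *
      (\<Sum>i\<le>j. of_nat (j choose i) * (y / 2) ^ (j - i) * jacobiP_moment a b n i))
    = 2 powr (a + b + 1)
      * (Gamma (a + real n + 1) * Gamma (b + real n + 1) / Gamma (a + b + 2 * real n + 2))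
      * pochhammer (a + b + real m + real n + 1) (m + n) * (1 / (fact n * fact m))
      * appellF2_poly m (b + real n + 1) (- b - real m - real n) (a + b + 2 * real n + 2)
          (- a - b - 2 * real m - 2 * real n) y"
    (is "?lhs = ?K * _")
proof -
  define h where "h = jacobiP_coeff (n + m) a b"
  define M where "M = jacobiP_moment a b n"
  define t where "t = y / 2"
  define T where "T k l = pochhammer (- real m) (k + l) * pochhammer (b + real n + 1) k
      * pochhammer (- b - real m - real n) l / (pochhammer (a + b + 2 * real n + 2) k
      * pochhammer (- a - b - 2 * real m - 2 * real n) l * fact k * fact l) * (-1) ^ k" for k l
  have M0: "M i = 0" if "i < n" for i
    using that by (simp add: M_def jacobiP_moment_eq_0)
  have inner: "(\<Sum>i\<le>n + q. of_nat ((n + q) choose i) * t ^ (n + q - i) * M i)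
      = (\<Sum>k\<le>q. of_nat ((n + q) choose (n + k)) * t ^ (q - k) * M (n + k))" for q
    by (subst sum_atMost_add_vanishing_below) (simp_all add: M0)
  have "?lhs
      = (\<Sum>q\<le>m. h (n + q) * (\<Sum>i\<le>n + q. of_nat ((n + q) choose i) * t ^ (n + q - i) * M i))"
    unfolding h_def[symmetric] M_def[symmetric] t_def[symmetric]
    by (rule sum_atMost_add_vanishing_below) (simp add: M0)
  also have "\<dots> = (\<Sum>q\<le>m. \<Sum>k\<le>q. ?K * (T k (m - q) * t ^ (q - k)))"
    unfolding inner sum_distrib_left
  proof (intro sum.cong refl)
    fix q k assume "q \<in> {..m}" "k \<in> {..q}"
    then have "h (n + q) * of_nat ((n + q) choose (n + k)) * M (n + k) = ?K * T k (m - q)"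
      unfolding h_def M_def T_def by (intro jacobiP_coeff_moment_eq_appellF2_term[OF a b]) auto
    from arg_cong[OF this, of "\<lambda>z. z * t ^ (q - k)"]
    show "h (n + q) * (of_nat ((n + q) choose (n + k)) * t ^ (q - k) * M (n + k))
        = ?K * (T k (m - q) * t ^ (q - k))"
      by (simp only: mult_ac)
  qed
  also have "\<dots> = ?K * (\<Sum>(k, j)\<in>{(k, j). k + j \<le> m}. T k (m - k - j) * t ^ j)"
    unfolding sum.triangle_reindex_eq sum_distrib_left by (intro sum.cong refl) auto
  also have "\<dots> = ?K * (\<Sum>k\<le>m. \<Sum>l\<le>m - k. T k l * t ^ (m - k - l))"
    unfolding sum_triangle_eq_nested
    by (subst (2) sum_atMost_rev) (intro sum.cong refl arg_cong2[where f = "(*)"]; auto)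
  also have "\<dots> = ?K * appellF2_poly m (b + real n + 1) (- b - real m - real n)
      (a + b + 2 * real n + 2) (- a - b - 2 * real m - 2 * real n) y"
    by (simp add: appellF2_poly_def T_def t_def)
  finally show ?thesis .
qed

theorem theorem1:
  fixes a b y :: real and m n :: nat
  assumes "a > -1" and "b > -1"
  shows "jacobi_R a b m n y =
    2 powr (a + b + 1) * (Gamma (a + real n + 1) * Gamma (b + real n + 1) / Gamma (a + b + 2 * real n + 2))
    * pochhammer (a + b + real m + real n + 1) (m + n)
    * (1 / (fact n * fact m))
    * appellF2_poly m (b + real n + 1) (- b - real m - real n) (a + b + 2 * real n + 2)
        (- a - b - 2 * real m - 2 * real n) y"
  unfolding jacobi_R_eq_sum_moments[OF assms]
  by (rule sum_jacobiP_coeff_moments_eq_appellF2_poly[OF assms])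

end
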